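(* Let $\mathbf{a}$ be a centered symplectic cellular automaton (CSCA) and let $\xi=(\xi_+,\xi_-)\in\mathcal{P}^2$ be a non-zero phase space vector with $\mathbf{a}\xi=u^n\xi$ for some $n\in\mathbb{N}$. Then: (1) $\mathbf{a}\bar\xi=u^{-n}\bar\xi$; (2) $\mathbf{a}$ is uniquely given by $$\mathbf{a}_{11}=\frac{u^n\xi_+\bar\xi_-+u^{-n}\bar\xi_+\xi_-}{\xi\wedge\bar\xi},\quad \mathbf{a}_{12}=\frac{(u^n+u^{-n})\xi_+\bar\xi_+}{\xi\wedge\bar\xi},\quad \mathbf{a}_{21}=\frac{(u^n+u^{-n})\xi_-\bar\xi_-}{\xi\wedge\bar\xi},\quad \mathbf{a}_{22}=\frac{u^{-n}\xi_+\bar\xi_-+u^{n}\bar\xi_+\xi_-}{\xi\wedge\bar\xi};$$ (3) $\mathrm{tr}\,\mathbf{a}=u^{-n}+u^n$; (4) every glider of $\mathbf{a}$ is a multiple (by an element of $\mathcal{P}$) of $$\left(\frac{\mathbf{a}_{12}}{\gcd(u^n+\mathbf{a}_{11},\mathbf{a}_{12})},\ \frac{u^n+\mathbf{a}_{11}}{\gcd(u^n+\mathbf{a}_{11},\mathbf{a}_{12})}\right)\quad\text{or of}\quad \left(\frac{\mathbf{a}_{12}}{\gcd(u^{-n}+\mathbf{a}_{11},\mathbf{a}_{12})},\ \frac{u^{-n}+\mathbf{a}_{11}}{\gcd(u^{-n}+\mathbf{a}_{11},\mathbf{a}_{12})}\right).$$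
   Context: $\mathcal{P}$ denotes the ring of Laurent polynomials in a variable $u$ over the field $\mathbb{Z}_2$ (all arithmetic mod 2). For $p\in\mathcal{P}$, $\bar p$ denotes the involution $p(u)\mapsto p(u^{-1})$; for vectors and matrices it is applied entrywise. $\mathcal{R}\subset\mathcal{P}$ is the subring of palindromes, $\bar p=p$. A centered symplectic cellular automaton (CSCA) is a $2\times 2$ matrix with entries in $\mathcal{R}$ and determinant $1$, acting on column vectors $\xi=(\xi_+,\xi_-)^T\in\mathcal{P}^2$ (phase space vectors, which label tensor products of Pauli matrices on a spin chain). A glider of $\mathbf{a}$ is a non-zero $\xi\in\mathcal{P}^2$ with $\mathbf{a}\xi=u^k\xi$ for some integer $k$. The wedge product is $\xi\wedge\eta=\xi_+\eta_-+\eta_+\xi_-$. *)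

theory Defs
  imports "HOL-Library.Poly_Mapping" "HOL-Library.Z2"
begin

text \<open>Laurent polynomials in u over Z_2: finitely supported maps from exponents (int)
  to coefficients in the field bit = Z_2, with convolution product (group ring Z_2[Z]).\<close>
type_synonym laurent = "int \<Rightarrow>\<^sub>0 bit"

definition upow :: "int \<Rightarrow> laurent" where
  "upow k = Poly_Mapping.single k 1"

text \<open>The involution p(u) \<mapsto> p(u^{-1}).\<close>
lift_definition lbar :: "laurent \<Rightarrow> laurent" is "\<lambda>f i. f (- i)"
proof -
  fix f :: "int \<Rightarrow> bit" assume "finite {i. f i \<noteq> 0}"
  then have "finite (uminus ` {i. f i \<noteq> 0})" by simp
  moreover have "{i. f (- i) \<noteq> 0} = uminus ` {i. f i \<noteq> 0}"
    by (auto intro: image_eqI[where x="- _"])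
  ultimately show "finite {i. f (- i) \<noteq> 0}" by simp
qed

definition palindrome :: "laurent \<Rightarrow> bool" where
  "palindrome p \<longleftrightarrow> lbar p = p"

type_synonym mat2 = "laurent \<times> laurent \<times> laurent \<times> laurent"
type_synonym pvec = "laurent \<times> laurent"

fun mat_app :: "mat2 \<Rightarrow> pvec \<Rightarrow> pvec" where
  "mat_app (a11, a12, a21, a22) (x, y) = (a11 * x + a12 * y, a21 * x + a22 * y)"

fun smul :: "laurent \<Rightarrow> pvec \<Rightarrow> pvec" where
  "smul c (x, y) = (c * x, c * y)"

fun vbar :: "pvec \<Rightarrow> pvec" where
  "vbar (x, y) = (lbar x, lbar y)"

fun wedge :: "pvec \<Rightarrow> pvec \<Rightarrow> laurent" where
  "wedge (xp, xm) (yp, ym) = xp * ym + yp * xm"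

fun det2 :: "mat2 \<Rightarrow> laurent" where
  "det2 (a11, a12, a21, a22) = a11 * a22 - a12 * a21"

fun tr2 :: "mat2 \<Rightarrow> laurent" where
  "tr2 (a11, a12, a21, a22) = a11 + a22"

fun csca :: "mat2 \<Rightarrow> bool" where
  "csca (a11, a12, a21, a22) \<longleftrightarrow>
     palindrome a11 \<and> palindrome a12 \<and> palindrome a21 \<and> palindrome a22 \<and>
     det2 (a11, a12, a21, a22) = 1"

definition glider :: "mat2 \<Rightarrow> pvec \<Rightarrow> bool" where
  "glider a \<xi> \<longleftrightarrow> \<xi> \<noteq> (0, 0) \<and> (\<exists>k::int. mat_app a \<xi> = smul (upow k) \<xi>)"

definition is_gcd :: "laurent \<Rightarrow> laurent \<Rightarrow> laurent \<Rightarrow> bool" where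
  "is_gcd g p q \<longleftrightarrow> g dvd p \<and> g dvd q \<and> (\<forall>d. d dvd p \<and> d dvd q \<longrightarrow> d dvd g)"

end

theory Submission
  imports Defs "HOL-Computational_Algebra.Polynomial"
begin

text \<open>
  Write \<open>\<xi>' = vbar \<xi>\<close>. Applying the involution to \<open>a \<xi> = u\<^sup>n \<xi>\<close> and using that the
  entries of \<open>a\<close> are palindromes gives \<open>a \<xi>' = u\<^sup>-\<^sup>n \<xi>'\<close>. Cramer's rule for the matrix
  \<open>[\<xi> \<xi>']\<close>, whose determinant is \<open>\<xi> \<and> \<xi>'\<close> in characteristic 2, then yields the entries
  of \<open>a\<close> times the wedge, and hence the trace; the wedge is non-zero because \<open>u\<^sup>n \<noteq> u\<^sup>-\<^sup>n\<close>.
  Trace and determinant fix the characteristic polynomial \<open>(\<lambda> - u\<^sup>n)(\<lambda> - u\<^sup>-\<^sup>n)\<close>, so a glider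
  has eigenvalue \<open>u\<^sup>\<plusminus>\<^sup>n\<close> and lies in the kernel of the first row \<open>(u\<^sup>\<plusminus>\<^sup>n + a\<^sub>1\<^sub>1, a\<^sub>1\<^sub>2)\<close> of
  \<open>a - u\<^sup>\<plusminus>\<^sup>n\<close>. Laurent polynomials over \<open>\<int>\<^sub>2\<close> form a Bezout domain, being a localisation of
  the euclidean ring \<open>\<int>\<^sub>2[u]\<close>, so that kernel is generated by the swapped row divided by its gcd.
\<close>

lemma eigenbasis_entries:
  fixes a11 a12 a21 a22 x1 x2 y1 y2 u v :: "'a::comm_ring"
  assumes x1: "a11 * x1 + a12 * x2 = u * x1" and x2: "a21 * x1 + a22 * x2 = u * x2"
    and y1: "a11 * y1 + a12 * y2 = v * y1" and y2: "a21 * y1 + a22 * y2 = v * y2"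
  defines "D \<equiv> x1 * y2 - y1 * x2"
  shows "a11 * D = u * x1 * y2 - v * y1 * x2"
    and "a12 * D = (v - u) * x1 * y1"
    and "a21 * D = (u - v) * x2 * y2"
    and "a22 * D = v * x1 * y2 - u * y1 * x2"
proof -
  have "a11 * D = (a11 * x1 + a12 * x2) * y2 - (a11 * y1 + a12 * y2) * x2"
    unfolding D_def by (simp add: algebra_simps)
  then show "a11 * D = u * x1 * y2 - v * y1 * x2" by (simp add: x1 y1 algebra_simps)
  have "a12 * D = (a11 * y1 + a12 * y2) * x1 - (a11 * x1 + a12 * x2) * y1"
    unfolding D_def by (simp add: algebra_simps)
  then show "a12 * D = (v - u) * x1 * y1" by (simp add: x1 y1 algebra_simps)
  have "a21 * D = (a21 * x1 + a22 * x2) * y2 - (a21 * y1 + a22 * y2) * x2"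
    unfolding D_def by (simp add: algebra_simps)
  then show "a21 * D = (u - v) * x2 * y2" by (simp add: x2 y2 algebra_simps)
  have "a22 * D = (a21 * y1 + a22 * y2) * x1 - (a21 * x1 + a22 * x2) * y1"
    unfolding D_def by (simp add: algebra_simps)
  then show "a22 * D = v * x1 * y2 - u * y1 * x2" by (simp add: x2 y2 algebra_simps)
qed

lemma eigenvalue_char_poly:
  fixes a11 a12 a21 a22 e1 e2 l :: "'a::idom"
  assumes nz: "(e1, e2) \<noteq> (0, 0)"
    and e1: "a11 * e1 + a12 * e2 = l * e1" and e2: "a21 * e1 + a22 * e2 = l * e2"
  shows "l * l - (a11 + a22) * l + (a11 * a22 - a12 * a21) = 0"
proof -
  define c where "c = l * l - (a11 + a22) * l + (a11 * a22 - a12 * a21)"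
  have "c * e1 = (a22 - l) * (a11 * e1 + a12 * e2 - l * e1) - a12 * (a21 * e1 + a22 * e2 - l * e2)"
    unfolding c_def by (simp add: algebra_simps)
  then have "c * e1 = 0" using e1 e2 by simp
  have "c * e2 = (a11 - l) * (a21 * e1 + a22 * e2 - l * e2) - a21 * (a11 * e1 + a12 * e2 - l * e1)"
    unfolding c_def by (simp add: algebra_simps)
  then have "c * e2 = 0" using e1 e2 by simp
  with \<open>c * e1 = 0\<close> nz show ?thesis unfolding c_def by auto
qed

lemma eigenvalue_eq_root:
  fixes a11 a12 a21 a22 e1 e2 l u v :: "'a::idom"
  assumes "(e1, e2) \<noteq> (0, 0)"
    and "a11 * e1 + a12 * e2 = l * e1" and "a21 * e1 + a22 * e2 = l * e2"
    and "a11 + a22 = u + v" and "a11 * a22 - a12 * a21 = u * v"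
  shows "l = u \<or> l = v"
proof -
  have "(l - u) * (l - v) = 0"
    using eigenvalue_char_poly[OF assms(1-3)] assms(4,5) by (simp add: algebra_simps)
  then show ?thesis by simp
qed

lemma euclidean_ring_bezout:
  fixes a b :: "'a::euclidean_ring"
  shows "\<exists>x y d. a * x + b * y = d \<and> d dvd a \<and> d dvd b"
proof (induction "euclidean_size b" arbitrary: a b rule: less_induct)
  case less
  show ?case
  proof (cases "b = 0")
    case True
    then show ?thesis by (rule_tac x = 1 in exI, rule_tac x = 0 in exI) simp
  next
    case False
    then have "euclidean_size (a mod b) < euclidean_size b" by (rule mod_size_less)
    from less[OF this] obtain x y d
      where d: "b * x + (a mod b) * y = d" "d dvd b" "d dvd a mod b" by blast
    have "d dvd a" using d(2,3) by (metis div_mult_mod_eq dvd_add dvd_mult)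
    moreover have "a * y + b * (x - (a div b) * y) = d"
      using d(1) by (simp add: minus_div_mult_eq_mod[symmetric] algebra_simps)
    ultimately show ?thesis using d(2) by blast
  qed
qed

lemma poly_mapping_add_single_induct:
  fixes f :: "'a \<Rightarrow>\<^sub>0 'b::monoid_add"
  assumes "P 0" and "\<And>f k c. P f \<Longrightarrow> P (f + Poly_Mapping.single k c)"
  shows "P f"
proof (induction f rule: update_induct)
  case const
  show ?case using assms(1) .
next
  case (update f a b)
  have "Poly_Mapping.update a b f = f + Poly_Mapping.single a b"
    using update(1) by (intro poly_mapping_eqI)
      (auto simp: lookup_update lookup_add lookup_single not_in_keys_iff_lookup_eq_zero)
  then show ?case using assms(2) update by simp
qed

lemma lbar_single: "lbar (Poly_Mapping.single k c) = Poly_Mapping.single (- k) c"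
  by (intro poly_mapping_eqI) (auto simp: lbar.rep_eq lookup_single when_def)

lemma lbar_add: "lbar (p + q) = lbar p + lbar q"
  by (intro poly_mapping_eqI) (simp add: lbar.rep_eq lookup_add)

lemma lbar_0 [simp]: "lbar 0 = 0"
  by (intro poly_mapping_eqI) (simp add: lbar.rep_eq)

lemma lbar_lbar [simp]: "lbar (lbar p) = p"
  by (intro poly_mapping_eqI) (simp add: lbar.rep_eq)

lemma lbar_eq_0_iff [simp]: "lbar p = 0 \<longleftrightarrow> p = 0"
  by (metis lbar_0 lbar_lbar)

lemma lbar_mult_single:
  "lbar (Poly_Mapping.single k c * q) = Poly_Mapping.single (- k) c * lbar q"
proof (induction q rule: poly_mapping_add_single_induct)
  case 1
  show ?case by simp
next
  case (2 f l d)
  then show ?case by (simp add: distrib_left lbar_add lbar_single mult_single)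
qed

lemma lbar_mult: "lbar (p * q) = lbar p * lbar q"
proof (induction p rule: poly_mapping_add_single_induct)
  case 1
  show ?case by simp
next
  case (2 f l c)
  then show ?case by (simp add: distrib_right lbar_add lbar_single lbar_mult_single)
qed

lemma laurent_add_self: "(p :: laurent) + p = 0"
proof -
  have "(2 :: laurent) = Poly_Mapping.single 0 (2 :: bit)"
    by (simp only: single_numeral)
  then have "(2 :: laurent) = 0" by simp
  then show ?thesis by (metis mult_2 mult_zero_left)
qed

lemma laurent_add_eq_0_iff: "(p :: laurent) + q = 0 \<longleftrightarrow> p = q"
  by (metis add_eq_0_iff laurent_add_self)

lemma laurent_diff_eq_add: "(p :: laurent) - q = p + q"
  by (metis add_eq_0_iff laurent_add_self diff_conv_add_uminus)

lemma upow_add: "upow a * upow b = upow (a + b)"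
  by (simp add: upow_def mult_single)

lemma upow_0 [simp]: "upow 0 = 1"
  by (simp add: upow_def)

lemma upow_eq_iff: "upow a = upow b \<longleftrightarrow> a = b"
  unfolding upow_def by (metis lookup_single_eq lookup_single_not_eq one_neq_zero)

lemma lbar_upow: "lbar (upow k) = upow (- k)"
  by (simp add: upow_def lbar_single)

lemma palindrome_upow_iff: "palindrome (upow k) \<longleftrightarrow> k = 0"
  by (auto simp: palindrome_def lbar_upow upow_eq_iff)

lemma upow_power: "upow 1 ^ n = upow (int n)"
  by (induction n) (simp_all add: upow_add add.commute)

definition laurent_of_poly :: "bit poly \<Rightarrow> laurent" where
  "laurent_of_poly P = poly (map_poly (Poly_Mapping.single 0) P) (upow 1)"

lemma map_poly_single_add:
  "map_poly (Poly_Mapping.single 0) (P + Q) =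
     map_poly (Poly_Mapping.single 0) P + map_poly (Poly_Mapping.single 0) Q"
  by (rule poly_eqI) (simp add: coeff_map_poly single_add)

lemma map_poly_single_mult:
  "map_poly (Poly_Mapping.single 0) (P * Q) =
     map_poly (Poly_Mapping.single 0) P * map_poly (Poly_Mapping.single 0) Q"
proof (induction P)
  case 0
  show ?case by simp
next
  case (pCons c P)
  then show ?case
    by (simp add: map_poly_single_add map_poly_pCons map_poly_smult mult_single)
qed

lemma laurent_of_poly_add: "laurent_of_poly (P + Q) = laurent_of_poly P + laurent_of_poly Q"
  by (simp add: laurent_of_poly_def map_poly_single_add)

lemma laurent_of_poly_mult: "laurent_of_poly (P * Q) = laurent_of_poly P * laurent_of_poly Q"
  by (simp add: laurent_of_poly_def map_poly_single_mult)

lemma laurent_of_poly_const: "laurent_of_poly [:c:] = Poly_Mapping.single 0 c"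
  by (simp add: laurent_of_poly_def map_poly_pCons)

lemma laurent_of_poly_monom: "laurent_of_poly (monom 1 n) = upow (int n)"
  by (simp add: laurent_of_poly_def map_poly_monom poly_monom upow_power)

lemma laurent_of_poly_dvd: "P dvd Q \<Longrightarrow> laurent_of_poly P dvd laurent_of_poly Q"
  by (metis dvdE dvdI laurent_of_poly_mult)

lemma laurent_eq_upow_mult_laurent_of_poly: "\<exists>m P. p = upow m * laurent_of_poly P"
proof (induction p rule: poly_mapping_add_single_induct)
  case 1
  show ?case by (intro exI[of _ 0]) (simp add: laurent_of_poly_def)
next
  case (2 f k c)
  then obtain m P where f: "f = upow m * laurent_of_poly P" by blast
  define m0 where "m0 = min m k"
  have shift: "upow j = upow m0 * laurent_of_poly (monom 1 (nat (j - m0)))" if "m0 \<le> j" for j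
    using that by (simp add: laurent_of_poly_monom upow_add)
  have um: "upow m = upow m0 * laurent_of_poly (monom 1 (nat (m - m0)))"
    and uk: "upow k = upow m0 * laurent_of_poly (monom 1 (nat (k - m0)))"
    by (rule shift, simp add: m0_def)+
  have "Poly_Mapping.single k c = upow k * laurent_of_poly [:c:]"
    by (simp add: laurent_of_poly_const upow_def mult_single)
  then have "f + Poly_Mapping.single k c = upow m0 *
      laurent_of_poly (monom 1 (nat (m - m0)) * P + monom 1 (nat (k - m0)) * [:c:])"
    unfolding f um uk
    by (simp only: laurent_of_poly_add laurent_of_poly_mult) (simp add: algebra_simps)
  then show ?case by blast
qed

lemma laurent_bezout:
  fixes q1 q2 :: laurent
  assumes coprime: "\<And>d. d dvd q1 \<Longrightarrow> d dvd q2 \<Longrightarrow> d dvd 1"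
  shows "\<exists>x y. q1 * x + q2 * y = 1"
proof -
  obtain m1 A where q1: "q1 = upow m1 * laurent_of_poly A"
    using laurent_eq_upow_mult_laurent_of_poly by blast
  obtain m2 B where q2: "q2 = upow m2 * laurent_of_poly B"
    using laurent_eq_upow_mult_laurent_of_poly by blast
  obtain x y d where d: "A * x + B * y = d" "d dvd A" "d dvd B"
    using euclidean_ring_bezout by blast
  have "laurent_of_poly d dvd q1" "laurent_of_poly d dvd q2"
    unfolding q1 q2 using d(2,3) by (simp_all add: laurent_of_poly_dvd)
  then obtain w where w: "laurent_of_poly d * w = 1"
    using coprime by (metis dvdE)
  have inv: "upow (- m) * upow m = 1" for m by (simp add: upow_add)
  have "q1 * (upow (- m1) * laurent_of_poly x * w) + q2 * (upow (- m2) * laurent_of_poly y * w)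
      = (upow (- m1) * upow m1) * laurent_of_poly A * laurent_of_poly x * w
        + (upow (- m2) * upow m2) * laurent_of_poly B * laurent_of_poly y * w"
    unfolding q1 q2 by (simp add: algebra_simps)
  also have "\<dots> = laurent_of_poly (A * x + B * y) * w"
    unfolding inv by (simp add: laurent_of_poly_add laurent_of_poly_mult algebra_simps)
  also have "\<dots> = 1" using d(1) w by (simp add: mult.commute)
  finally show ?thesis by blast
qed

lemma is_gcd_quotients_coprime:
  fixes g b c q1 q2 d :: laurent
  assumes "is_gcd g c b" and "q1 * g = b" and "q2 * g = c" and "g \<noteq> 0"
    and "d dvd q1" and "d dvd q2"
  shows "d dvd 1"
proof -
  have "d * g dvd b" "d * g dvd c"
    using assms(2,3,5,6) mult_dvd_mono[OF _ dvd_refl, of d] by blast+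
  then have "d * g dvd g" using assms(1) unfolding is_gcd_def by blast
  then obtain k where "g = d * g * k" by (rule dvdE)
  then have "g * 1 = g * (d * k)" by (simp add: algebra_simps)
  with \<open>g \<noteq> 0\<close> have "1 = d * k" by simp
  then show "d dvd 1" by (rule dvdI)
qed

lemma laurent_kernel_multiple:
  fixes g b c q1 q2 e1 e2 :: laurent
  assumes gcd: "is_gcd g c b" and q1: "q1 * g = b" and q2: "q2 * g = c" and "g \<noteq> 0"
    and kernel: "c * e1 + b * e2 = 0"
  shows "\<exists>p. (e1, e2) = smul p (q1, q2)"
proof -
  obtain x y where xy: "q1 * x + q2 * y = 1"
    using laurent_bezout[OF is_gcd_quotients_coprime[OF assms(1-4)]] by blast
  have "g * (q2 * e1 + q1 * e2) = 0"
    using kernel unfolding q1[symmetric] q2[symmetric] by (simp add: algebra_simps)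
  with \<open>g \<noteq> 0\<close> have proportional: "q2 * e1 = q1 * e2" by (simp add: laurent_add_eq_0_iff)
  define p where "p = e1 * x + e2 * y"
  have "e1 = e1 * (q1 * x + q2 * y)" using xy by simp
  also have "\<dots> = q1 * e1 * x + (q2 * e1) * y" by (simp add: algebra_simps)
  also have "\<dots> = p * q1" unfolding proportional p_def by (simp add: algebra_simps)
  finally have "e1 = p * q1" .
  have "e2 = e2 * (q1 * x + q2 * y)" using xy by simp
  also have "\<dots> = (q1 * e2) * x + q2 * e2 * y" by (simp add: algebra_simps)
  also have "\<dots> = p * q2" unfolding proportional[symmetric] p_def by (simp add: algebra_simps)
  finally have "e2 = p * q2" .
  with \<open>e1 = p * q1\<close> show ?thesis by auto
qed

lemma csca_conj_eigenvector:
  assumes "csca (a11, a12, a21, a22)"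
    and "mat_app (a11, a12, a21, a22) \<xi> = smul (upow k) \<xi>"
  shows "mat_app (a11, a12, a21, a22) (vbar \<xi>) = smul (upow (- k)) (vbar \<xi>)"
proof -
  obtain xp xm where \<xi>: "\<xi> = (xp, xm)" by fastforce
  have "lbar a11 = a11" "lbar a12 = a12" "lbar a21 = a21" "lbar a22 = a22"
    using assms(1) by (simp_all add: palindrome_def)
  moreover have "lbar (a11 * xp + a12 * xm) = lbar (upow k * xp)"
    and "lbar (a21 * xp + a22 * xm) = lbar (upow k * xm)"
    using assms(2) by (simp_all add: \<xi>)
  ultimately show ?thesis
    by (simp add: \<xi> lbar_add lbar_mult lbar_upow)
qed

lemma csca_eigenvector_multiple:
  assumes "csca (a11, a12, a21, a22)" and "k \<noteq> 0"
    and eig: "mat_app (a11, a12, a21, a22) \<eta> = smul (upow k) \<eta>"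
    and "is_gcd g (upow k + a11) a12" and "q1 * g = a12" and q2: "q2 * g = upow k + a11"
  shows "\<exists>p. \<eta> = smul p (q1, q2)"
proof -
  obtain e1 e2 where \<eta>: "\<eta> = (e1, e2)" by fastforce
  have "g \<noteq> 0"
  proof
    assume "g = 0"
    then have "a11 = upow k" using q2 by (simp add: laurent_add_eq_0_iff)
    with assms(1,2) show False by (simp add: palindrome_upow_iff)
  qed
  have row: "a11 * e1 + a12 * e2 = upow k * e1" using eig by (simp add: \<eta>)
  have "(upow k + a11) * e1 + a12 * e2 = (a11 * e1 + a12 * e2) + upow k * e1"
    by (simp add: algebra_simps)
  also have "\<dots> = 0" unfolding row by (rule laurent_add_self)
  finally have "(upow k + a11) * e1 + a12 * e2 = 0" .
  with laurent_kernel_multiple[OF assms(4,5) q2 \<open>g \<noteq> 0\<close>] show ?thesis by (simp add: \<eta>)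
qed

lemma csca_eigenvector_formulas:
  assumes csca: "csca (a11, a12, a21, a22)" and "k \<noteq> 0" and "(xp, xm) \<noteq> (0, 0)"
    and eig: "mat_app (a11, a12, a21, a22) (xp, xm) = smul (upow k) (xp, xm)"
  defines "W \<equiv> wedge (xp, xm) (vbar (xp, xm))" and "u \<equiv> upow k" and "v \<equiv> upow (- k)"
  shows "W \<noteq> 0"
    and "a11 * W = u * xp * lbar xm + v * lbar xp * xm"
    and "a12 * W = (v + u) * xp * lbar xp"
    and "a21 * W = (u + v) * xm * lbar xm"
    and "a22 * W = v * xp * lbar xm + u * lbar xp * xm"
    and "a11 + a22 = u + v"
proof -
  have "a11 * xp + a12 * xm = u * xp" "a21 * xp + a22 * xm = u * xm"
    and "a11 * lbar xp + a12 * lbar xm = v * lbar xp" "a21 * lbar xp + a22 * lbar xm = v * lbar xm"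
    using eig csca_conj_eigenvector[OF csca eig] by (simp_all add: u_def v_def)
  moreover have W: "W = xp * lbar xm - lbar xp * xm" by (simp add: W_def laurent_diff_eq_add)
  ultimately show entries:
    "a11 * W = u * xp * lbar xm + v * lbar xp * xm"
    "a12 * W = (v + u) * xp * lbar xp"
    "a21 * W = (u + v) * xm * lbar xm"
    "a22 * W = v * xp * lbar xm + u * lbar xp * xm"
    using eigenbasis_entries[of a11 xp a12 xm u a21 a22 "lbar xp" "lbar xm" v]
    by (simp_all only: W[symmetric] laurent_diff_eq_add)
  have "u + v \<noteq> 0"
    using \<open>k \<noteq> 0\<close> by (simp add: u_def v_def upow_eq_iff laurent_add_eq_0_iff)
  show "W \<noteq> 0"
  proof
    assume "W = 0"
    then have "(u + v) * (xp * lbar xp) = 0" "(u + v) * (xm * lbar xm) = 0"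
      using entries(2,3) by (simp_all add: algebra_simps)
    with \<open>u + v \<noteq> 0\<close> \<open>(xp, xm) \<noteq> (0, 0)\<close> show False by simp
  qed
  have "(a11 + a22) * W = (u + v) * (xp * lbar xm + lbar xp * xm)"
    using entries(1,4) by (simp add: algebra_simps)
  also have "\<dots> = (u + v) * W" by (simp add: W laurent_diff_eq_add)
  finally show "a11 + a22 = u + v" using \<open>W \<noteq> 0\<close> by simp
qed

lemma csca_glider_multiple:
  assumes csca: "csca (a11, a12, a21, a22)" and "k \<noteq> 0"
    and trace: "a11 + a22 = upow k + upow (- k)"
    and "is_gcd g (upow k + a11) a12" "q1 * g = a12" "q2 * g = upow k + a11"
    and "is_gcd g' (upow (- k) + a11) a12" "q1' * g' = a12" "q2' * g' = upow (- k) + a11"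
    and "glider (a11, a12, a21, a22) \<eta>"
  shows "(\<exists>p. \<eta> = smul p (q1, q2)) \<or> (\<exists>p. \<eta> = smul p (q1', q2'))"
proof -
  obtain e1 e2 where \<eta>: "\<eta> = (e1, e2)" by fastforce
  obtain l where "(e1, e2) \<noteq> (0, 0)"
    and eig: "mat_app (a11, a12, a21, a22) \<eta> = smul (upow l) \<eta>"
    using \<open>glider _ \<eta>\<close> unfolding glider_def \<eta> by blast
  moreover have "a11 * a22 - a12 * a21 = upow k * upow (- k)"
    using csca by (simp add: upow_add)
  ultimately have "upow l = upow k \<or> upow l = upow (- k)"
    using eigenvalue_eq_root[of e1 e2 a11 a12 "upow l" a21 a22, OF _ _ _ trace] by (simp add: \<eta>)
  then show ?thesis
    using csca_eigenvector_multiple[OF csca _ eig] assms(2,4-9)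
    unfolding upow_eq_iff by auto
qed

theorem mainTheorem1:
  fixes a11 a12 a21 a22 xp xm :: laurent and n :: nat
  assumes hcsca: "csca (a11, a12, a21, a22)"
    and hnz: "(xp, xm) \<noteq> (0, 0)"
    and hn: "n \<ge> 1"
    and heig: "mat_app (a11, a12, a21, a22) (xp, xm) = smul (upow (int n)) (xp, xm)"
  shows "mat_app (a11, a12, a21, a22) (vbar (xp, xm)) = smul (upow (- int n)) (vbar (xp, xm))
    \<and> (wedge (xp, xm) (vbar (xp, xm)) \<noteq> 0
         \<and> a11 * wedge (xp, xm) (vbar (xp, xm))
             = upow (int n) * xp * lbar xm + upow (- int n) * lbar xp * xm
         \<and> a12 * wedge (xp, xm) (vbar (xp, xm))
             = (upow (int n) + upow (- int n)) * xp * lbar xp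
         \<and> a21 * wedge (xp, xm) (vbar (xp, xm))
             = (upow (int n) + upow (- int n)) * xm * lbar xm
         \<and> a22 * wedge (xp, xm) (vbar (xp, xm))
             = upow (- int n) * xp * lbar xm + upow (int n) * lbar xp * xm)
    \<and> tr2 (a11, a12, a21, a22) = upow (- int n) + upow (int n)
    \<and> (\<forall>g q1 q2 g' q1' q2'.
           is_gcd g (upow (int n) + a11) a12 \<and> q1 * g = a12 \<and> q2 * g = upow (int n) + a11 \<and>
           is_gcd g' (upow (- int n) + a11) a12 \<and> q1' * g' = a12 \<and> q2' * g' = upow (- int n) + a11
           \<longrightarrow> (\<forall>\<eta>. glider (a11, a12, a21, a22) \<eta> \<longrightarrow>
                  (\<exists>p. \<eta> = smul p (q1, q2)) \<or> (\<exists>p. \<eta> = smul p (q1', q2'))))"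
proof -
  have "int n \<noteq> 0" using hn by simp
  note formulas = csca_eigenvector_formulas[OF hcsca this hnz heig]
  show ?thesis
    using csca_conj_eigenvector[OF hcsca heig] formulas
      csca_glider_multiple[OF hcsca \<open>int n \<noteq> 0\<close> formulas(6)]
    by (simp add: add.commute, blast)
qed

end
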